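(* There exists a constant $r_{m,1}>0$ depending only on $m$ such that for $P$-a.e. $\omega$ there exists $N_2(\omega)\in\mathbb N$ such that for every $n>N_2(\omega)$, $C_{Q_n(\omega)}\subset[-r_{m,1},r_{m,1}]$.
   Context: Fix $m>1/2$. Let $c_m:=\left(\int_{\mathbb R}(1+x^2)^{-m}dx\right)^{-1}$ and let $\nu_m(dx):=c_m(1+x^2)^{-m}dx$ (the Pearson Type VII law $\mathrm{PVII}_m(0,1)$). Let $(X_n)_{n\ge1}$ be i.i.d. random variables on $(\Omega,\mathcal F,P)$ with law $\nu_m$. For $t\in\mathbb R$ let $L_n(t):=\frac1n\sum_{i=1}^n\log(1+(X_i-t)^2)$. Let $Q_n(\omega):=\frac1n\sum_{i=1}^n\delta_{X_i(\omega)}$ be the empirical distribution and $C_{Q_n(\omega)}:=\{t\in\mathbb R: L_n(t)(\omega)=\min_{s\in\mathbb R}L_n(s)(\omega)\}$ the set of minimizers of $L_n(\cdot)(\omega)$ (the Fréchet mean set). *)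

theory Defs
  imports "HOL-Probability.Probability"
begin

definition pvii_const :: "real \<Rightarrow> real" where
  "pvii_const m = 1 / (\<integral>x. (1 + x\<^sup>2) powr (-m) \<partial>lborel)"

definition pvii :: "real \<Rightarrow> real measure" where
  "pvii m = density lborel (\<lambda>x. ennreal (pvii_const m * (1 + x\<^sup>2) powr (-m)))"

definition Ln :: "(nat \<Rightarrow> 'a \<Rightarrow> real) \<Rightarrow> nat \<Rightarrow> 'a \<Rightarrow> real \<Rightarrow> real" where
  "Ln X n \<omega> t = (1 / real n) * (\<Sum>i = 1..n. ln (1 + (X i \<omega> - t)\<^sup>2))"

definition frechet_mean_set :: "(nat \<Rightarrow> 'a \<Rightarrow> real) \<Rightarrow> nat \<Rightarrow> 'a \<Rightarrow> real set" where
  "frechet_mean_set X n \<omega> = {t. \<forall>s. Ln X n \<omega> t \<le> Ln X n \<omega> s}"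

end

theory Submission
  imports Defs
begin

text \<open>
  Write rho(x) = ln (1 + x^2) and pick K with nu_m [-K, K] > 3/4. By Hoeffding's inequality and
  Borel-Cantelli, almost surely more than 3/4 of X_1, ..., X_n lie in [-K, K] for all large n.
  For such a sample, replacing the centre 0 by some t with |t| >= 2K increases rho(X_i - .) by
  at least ln (1 + (|t| - K)^2) - ln (1 + K^2) at every inlier and, since
  1 + x^2 <= 2 (1 + t^2) (1 + (x - t)^2), decreases it by at most ln 2 + ln (1 + t^2) at every
  outlier. Beyond the radius 2K + 128 (1 + K^2)^3 the inliers' gain exceeds three times the
  outliers' loss, so L_n(t) > L_n(0) and t is no minimiser. The radius depends on the law only
  through K.
\<close>

definition minimiser_radius :: "real \<Rightarrow> real" where
  "minimiser_radius K = 2 * K + 128 * (1 + K\<^sup>2) ^ 3"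

lemma minimiser_radius_gt: "2 * K < minimiser_radius K"
proof -
  have "0 < (1 + K\<^sup>2) ^ 3"
    by (simp add: add_pos_nonneg)
  then show ?thesis
    unfolding minimiser_radius_def by linarith
qed

lemma ln_one_plus_sq_triangle:
  fixes x t :: real
  shows "ln (1 + x\<^sup>2) \<le> ln 2 + ln (1 + t\<^sup>2) + ln (1 + (x - t)\<^sup>2)"
proof -
  have pos: "0 < 1 + t\<^sup>2" "0 < 1 + (x - t)\<^sup>2"
    by (simp_all add: add_pos_nonneg)
  have "1 + x\<^sup>2 \<le> 2 * (1 + t\<^sup>2) * (1 + (x - t)\<^sup>2)"
  proof -
    have "0 \<le> (x - 2 * t)\<^sup>2 + 2 * t\<^sup>2 * (x - t)\<^sup>2" by simp
    then show ?thesis by (simp add: power2_eq_square algebra_simps)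
  qed
  then have "ln (1 + x\<^sup>2) \<le> ln (2 * (1 + t\<^sup>2) * (1 + (x - t)\<^sup>2))"
    by (simp add: add_pos_nonneg)
  also have "\<dots> = ln 2 + ln (1 + t\<^sup>2) + ln (1 + (x - t)\<^sup>2)"
    using pos by (simp only: ln_mult_pos mult_pos_pos zero_less_numeral)
  finally show ?thesis .
qed

lemma ln_one_plus_sq_far_shift_ge:
  fixes x t K :: real
  assumes "\<bar>x\<bar> \<le> K" "2 * K \<le> \<bar>t\<bar>"
  shows "ln (1 + x\<^sup>2) + (ln (1 + (\<bar>t\<bar> - K)\<^sup>2) - ln (1 + K\<^sup>2)) \<le> ln (1 + (x - t)\<^sup>2)"
proof -
  have "\<bar>x\<bar> \<le> \<bar>K\<bar>" "\<bar>\<bar>t\<bar> - K\<bar> \<le> \<bar>x - t\<bar>"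
    using assms by linarith+
  then have "x\<^sup>2 \<le> K\<^sup>2" "(\<bar>t\<bar> - K)\<^sup>2 \<le> (x - t)\<^sup>2"
    by (simp_all only: abs_le_square_iff)
  then have "ln (1 + x\<^sup>2) \<le> ln (1 + K\<^sup>2)" "ln (1 + (\<bar>t\<bar> - K)\<^sup>2) \<le> ln (1 + (x - t)\<^sup>2)"
    by (simp_all add: add_pos_nonneg)
  then show ?thesis by linarith
qed

lemma minimiser_radius_loss_lt_gain:
  fixes K t :: real
  assumes "K \<ge> 0" and "\<bar>t\<bar> > minimiser_radius K"
  shows "ln 2 + ln (1 + t\<^sup>2) < 3 * (ln (1 + (\<bar>t\<bar> - K)\<^sup>2) - ln (1 + K\<^sup>2))"
proof -
  define c where "c = 1 + K\<^sup>2"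
  define u where "u = 1 + t\<^sup>2"
  define a where "a = 1 + (\<bar>t\<bar> - K)\<^sup>2"
  have c: "1 \<le> c" and u: "1 \<le> u" and a: "0 < a"
    by (simp_all add: c_def u_def a_def add_pos_nonneg)
  have "minimiser_radius K = 2 * K + 128 * c ^ 3"
    by (simp add: minimiser_radius_def c_def)
  with assms one_le_power[OF c, of 3]
  have t_big: "128 * c ^ 3 < \<bar>t\<bar>" and K_small: "K \<le> \<bar>t\<bar> / 2"
    by linarith+
  have "1 \<le> \<bar>t\<bar>"
    using t_big one_le_power[OF c, of 3] by linarith
  then have "\<bar>t\<bar> \<le> t\<^sup>2"
    using power_increasing[of 1 2 "\<bar>t\<bar>"] by simp
  then have "128 * c ^ 3 < u"
    using t_big by (simp add: u_def)
  also have "u \<le> u\<^sup>2"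
    using power_increasing[of 1 2 u] u by simp
  finally have "u * (128 * c ^ 3) < u * u\<^sup>2"
    using u by simp
  then have "2 * u * c ^ 3 < (u / 4) ^ 3"
    by (simp add: power2_eq_square power3_eq_cube)
  also have "\<dots> \<le> a ^ 3"
  proof (rule power_mono)
    have "(\<bar>t\<bar> / 2)\<^sup>2 \<le> (\<bar>t\<bar> - K)\<^sup>2"
      using K_small assms(1) by (intro power_mono) auto
    then show "u / 4 \<le> a"
      by (simp add: a_def u_def power_divide)
  qed (use u in simp)
  finally have "ln (2 * u * c ^ 3) < ln (a ^ 3)"
    using u c a by (subst ln_less_cancel_iff) auto
  moreover have "ln (2 * u * c ^ 3) = ln 2 + ln u + 3 * ln c"
    using u c by (simp add: ln_mult ln_realpow)
  moreover have "ln (a ^ 3) = 3 * ln a"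
    using a by (simp add: ln_realpow)
  ultimately show ?thesis
    by (simp add: a_def c_def u_def)
qed

lemma sum_ln_one_plus_sq_lt_shift:
  fixes x :: "nat \<Rightarrow> real" and K t :: real
  assumes K: "K \<ge> 0"
    and concentrated: "3 / 4 < (\<Sum>i = 1..n. indicator {-K..K} (x i)) / n"
    and far: "\<bar>t\<bar> > minimiser_radius K"
  shows "(\<Sum>i = 1..n. ln (1 + (x i)\<^sup>2)) < (\<Sum>i = 1..n. ln (1 + (x i - t)\<^sup>2))"
proof -
  define gain where "gain = ln (1 + (\<bar>t\<bar> - K)\<^sup>2) - ln (1 + K\<^sup>2)"
  define loss where "loss = ln 2 + ln (1 + t\<^sup>2)"
  define inside where "inside = (\<Sum>i = 1..n. indicator {-K..K} (x i) :: real)"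
  have loss_gain: "loss < 3 * gain"
    using minimiser_radius_loss_lt_gain[OF K far] by (simp add: gain_def loss_def)
  have "0 \<le> loss"
    by (simp add: loss_def)
  have "2 * K \<le> \<bar>t\<bar>"
    using far minimiser_radius_gt[of K] by linarith
  then have pointwise: "ln (1 + (x i)\<^sup>2) + (indicator {-K..K} (x i) * (gain + loss) - loss)
      \<le> ln (1 + (x i - t)\<^sup>2)" for i
  proof (cases "x i \<in> {-K..K}")
    case True
    then have "\<bar>x i\<bar> \<le> K"
      by auto
    from ln_one_plus_sq_far_shift_ge[OF this \<open>2 * K \<le> \<bar>t\<bar>\<close>] True show ?thesis
      by (simp add: gain_def)
  next
    case False
    with ln_one_plus_sq_triangle[of "x i" t] show ?thesis
      by (simp add: loss_def)
  qed
  have "n > 0"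
    using concentrated by (cases n) auto
  then have "3 / 4 * n < inside"
    using concentrated by (simp add: inside_def field_simps)
  then have "3 / 4 * n * (gain + loss) < inside * (gain + loss)"
    using loss_gain \<open>0 \<le> loss\<close> by (intro mult_strict_right_mono) auto
  moreover have "n * loss \<le> n * (3 / 4 * (gain + loss))"
    using loss_gain by (intro mult_left_mono) auto
  ultimately have positive: "0 < inside * (gain + loss) - n * loss"
    by (simp add: algebra_simps)
  have "(\<Sum>i = 1..n. ln (1 + (x i)\<^sup>2)) + (inside * (gain + loss) - n * loss)
      = (\<Sum>i = 1..n. ln (1 + (x i)\<^sup>2) + (indicator {-K..K} (x i) * (gain + loss) - loss))"
    by (simp add: inside_def sum.distrib sum_subtractf sum_distrib_right)
  also have "\<dots> \<le> (\<Sum>i = 1..n. ln (1 + (x i - t)\<^sup>2))"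
    by (intro sum_mono pointwise)
  finally show ?thesis
    using positive by linarith
qed

lemma frechet_mean_set_subset_minimiser_radius:
  fixes X :: "nat \<Rightarrow> 'a \<Rightarrow> real" and K :: real
  assumes "K \<ge> 0" and "3 / 4 < (\<Sum>i = 1..n. indicator {-K..K} (X i \<omega>)) / n"
  shows "frechet_mean_set X n \<omega> \<subseteq> {-minimiser_radius K..minimiser_radius K}"
proof
  fix t assume t: "t \<in> frechet_mean_set X n \<omega>"
  show "t \<in> {-minimiser_radius K..minimiser_radius K}"
  proof (rule ccontr)
    assume "t \<notin> {-minimiser_radius K..minimiser_radius K}"
    then have far: "\<bar>t\<bar> > minimiser_radius K"
      by auto
    have "n > 0"
      using assms(2) by (cases n) auto
    with sum_ln_one_plus_sq_lt_shift[OF assms far]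
    have "(1 / n) * (\<Sum>i = 1..n. ln (1 + (X i \<omega>)\<^sup>2)) < (1 / n) * (\<Sum>i = 1..n. ln (1 + (X i \<omega> - t)\<^sup>2))"
      by (intro mult_strict_left_mono) simp_all
    then have "Ln X n \<omega> 0 < Ln X n \<omega> t"
      by (simp add: Ln_def)
    moreover have "Ln X n \<omega> t \<le> Ln X n \<omega> 0"
      using t by (simp add: frechet_mean_set_def)
    ultimately show False
      by simp
  qed
qed

lemma (in prob_space) Hoeffding_ineq_iid_initial_segment:
  fixes Y :: "nat \<Rightarrow> 'a \<Rightarrow> real"
  assumes indep: "indep_vars (\<lambda>_. borel) Y {1..}"
    and ident: "\<And>i. 1 \<le> i \<Longrightarrow> distr M borel (Y i) = distr M borel (Y 1)"
    and bounded: "AE \<omega> in M. Y 1 \<omega> \<in> {a..b}"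
  shows "Hoeffding_ineq_iid M {1..n} Y (Y 1) a b"
  unfolding Hoeffding_ineq_iid_def iid_interval_bounded_random_variables_def
    iid_interval_bounded_random_variables_axioms_def
proof (intro conjI allI impI)
  show "indep_vars (\<lambda>_. borel) Y {1..n}"
    by (rule indep_vars_subset[OF indep]) auto
  show "distr M borel (Y i) = distr M borel (Y 1)" if "i \<in> {1..n}" for i
    using that by (intro ident) simp
  show "random_variable borel (Y 1)"
    using indep by (simp add: indep_vars_def)
qed (use prob_space_axioms bounded in simp_all)

lemma (in prob_space) AE_eventually_sample_mean_gt:
  fixes Y :: "nat \<Rightarrow> 'a \<Rightarrow> real" and a b \<epsilon> :: real
  assumes indep: "indep_vars (\<lambda>_. borel) Y {1..}"
    and ident: "\<And>i. 1 \<le> i \<Longrightarrow> distr M borel (Y i) = distr M borel (Y 1)"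
    and bounded: "AE \<omega> in M. Y 1 \<omega> \<in> {a..b}" and "a < b" and "0 < \<epsilon>"
  shows "AE \<omega> in M. eventually (\<lambda>n. expectation (Y 1) - \<epsilon> < (\<Sum>i = 1..n. Y i \<omega>) / n) sequentially"
proof -
  define q where "q = exp (-2 * \<epsilon>\<^sup>2 / (b - a)\<^sup>2)"
  define A where "A n = {\<omega> \<in> space M. (\<Sum>i \<in> {1..n}. Y i \<omega>) / n \<le> expectation (Y 1) - \<epsilon>}" for n
  have rv: "random_variable borel (Y i)" if "1 \<le> i" for i
    using indep that by (auto simp: indep_vars_def)
  have A_events: "A n \<in> events" for n
  proof -
    have "(\<lambda>\<omega>. (\<Sum>i \<in> {1..n}. Y i \<omega>) / n) \<in> borel_measurable M"
      using rv by (intro borel_measurable_divide borel_measurable_sum) auto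
    then show ?thesis
      unfolding A_def by measurable
  qed
  have tail: "prob (A n) \<le> q ^ n" for n
  proof (cases "n = 0")
    case False
    have "prob (A n) \<le> exp (-2 * real (card {1..n}) * \<epsilon>\<^sup>2 / (b - a)\<^sup>2)"
      using Hoeffding_ineq_iid.Hoeffding_ineq_le'[OF Hoeffding_ineq_iid_initial_segment[OF indep ident bounded]
          less_imp_le[OF \<open>0 < \<epsilon>\<close>] \<open>a < b\<close>] False
      by (simp add: A_def)
    also have "\<dots> = exp (real n * (-2 * \<epsilon>\<^sup>2 / (b - a)\<^sup>2))"
      by simp
    finally show ?thesis
      by (simp only: q_def exp_of_nat_mult)
  qed simp
  have "0 < q" "q < 1"
    using \<open>a < b\<close> \<open>0 < \<epsilon>\<close> by (simp_all add: q_def)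
  then have "summable (\<lambda>n. prob (A n))"
    using tail by (intro summable_comparison_test[OF _ summable_geometric[of q]]) auto
  then have "AE \<omega> in M. eventually (\<lambda>n. \<omega> \<in> space M - A n) sequentially"
    by (intro borel_cantelli_AE1) (simp_all add: A_events less_top[symmetric])
  then show ?thesis
    by (rule AE_mp) (auto simp: A_def elim!: eventually_mono)
qed

lemma (in prob_space) AE_eventually_frequency_gt:
  fixes X :: "nat \<Rightarrow> 'a \<Rightarrow> real" and Q :: "real measure" and A :: "real set"
  assumes indep: "indep_vars (\<lambda>_. borel) X {1..}"
    and law: "\<And>i. 1 \<le> i \<Longrightarrow> distr M borel (X i) = Q"
    and A: "A \<in> sets borel" and "q < measure Q A"
  shows "AE \<omega> in M. eventually (\<lambda>n. q < (\<Sum>i = 1..n. indicator A (X i \<omega>)) / n) sequentially"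
proof -
  define Y where "Y i = (\<lambda>\<omega>. indicator A (X i \<omega>) :: real)" for i
  have rv: "random_variable borel (X i)" if "1 \<le> i" for i
    using indep that by (auto simp: indep_vars_def)
  have ind: "(indicator A :: real \<Rightarrow> real) \<in> borel_measurable borel"
    using A by simp
  have indep_Y: "indep_vars (\<lambda>_. borel) Y {1..}"
    unfolding Y_def using indep_vars_compose2[OF indep, of "\<lambda>_. indicator A" "\<lambda>_. borel"] ind by auto
  have "distr M borel (Y i) = distr Q borel (indicator A)" if "1 \<le> i" for i
    using distr_distr[OF ind rv[OF that]] law[OF that] by (simp add: Y_def comp_def)
  then have ident_Y: "distr M borel (Y i) = distr M borel (Y 1)" if "1 \<le> i" for i
    using that by simp
  have bounded_Y: "AE \<omega> in M. Y 1 \<omega> \<in> {0..1}"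
    by (simp add: Y_def)
  have "expectation (Y 1) = measure Q A"
  proof -
    have "expectation (Y 1) = integral\<^sup>L (distr M borel (X 1)) (indicator A)"
      unfolding Y_def by (rule integral_distr[symmetric, OF rv ind]) simp
    also have "\<dots> = measure Q A"
      using law[of 1, symmetric] A by simp
    finally show ?thesis .
  qed
  with AE_eventually_sample_mean_gt[OF indep_Y ident_Y bounded_Y zero_less_one, of "measure Q A - q"]
  show ?thesis
    using \<open>q < measure Q A\<close> by (simp add: Y_def)
qed

lemma (in real_distribution) exists_interval_measure_gt:
  assumes "q < 1"
  shows "\<exists>K \<ge> 0. q < measure M {-K..K}"
proof -
  have "((\<lambda>K. cdf M K - cdf M (-K)) \<longlongrightarrow> 1 - 0) at_top"
    by (intro tendsto_diff cdf_lim_at_top_prob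
        filterlim_compose[OF cdf_lim_at_bot filterlim_uminus_at_bot_at_top])
  then have "eventually (\<lambda>K. q < cdf M K - cdf M (-K) \<and> 0 < K) at_top"
    using assms by (intro eventually_conj order_tendstoD(1) eventually_gt_at_top) auto
  then obtain K where K: "q < cdf M K - cdf M (-K)" "0 < K"
    by (auto dest: eventually_happens)
  have "cdf M K - cdf M (-K) = measure M {-K<..K}"
    using K by (intro cdf_diff_eq) simp
  also have "\<dots> \<le> measure M {-K..K}"
    by (intro finite_measure_mono) auto
  finally show ?thesis
    using K by (intro exI[of _ K]) auto
qed

lemma (in prob_space) AE_eventually_frechet_mean_set_subset:
  fixes X :: "nat \<Rightarrow> 'a \<Rightarrow> real" and Q :: "real measure" and K :: real
  assumes "indep_vars (\<lambda>_. borel) X {1..}" and "\<And>i. 1 \<le> i \<Longrightarrow> distr M borel (X i) = Q"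
    and "K \<ge> 0" and "3 / 4 < measure Q {-K..K}"
  shows "AE \<omega> in M. \<exists>N. \<forall>n > N. frechet_mean_set X n \<omega> \<subseteq> {-minimiser_radius K..minimiser_radius K}"
proof -
  have "AE \<omega> in M. eventually (\<lambda>n. 3 / 4 < (\<Sum>i = 1..n. indicator {-K..K} (X i \<omega>)) / n) sequentially"
    using assms by (intro AE_eventually_frequency_gt) auto
  then show ?thesis
  proof (rule AE_mp, intro AE_I2 impI)
    fix \<omega>
    assume "eventually (\<lambda>n. 3 / 4 < (\<Sum>i = 1..n. indicator {-K..K} (X i \<omega>)) / n) sequentially"
    then obtain N where N: "\<And>n. N \<le> n \<Longrightarrow> 3 / 4 < (\<Sum>i = 1..n. indicator {-K..K} (X i \<omega>)) / n"
      by (auto simp: eventually_sequentially)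
    show "\<exists>N. \<forall>n > N. frechet_mean_set X n \<omega> \<subseteq> {-minimiser_radius K..minimiser_radius K}"
      by (intro exI[of _ N] allI impI frechet_mean_set_subset_minimiser_radius[OF \<open>K \<ge> 0\<close>] N) simp
  qed
qed

theorem frechet_mean_set_eventually_bounded:
  fixes Q :: "real measure"
  shows "\<exists>r>0. \<forall>(M :: 'a measure) (X :: nat \<Rightarrow> 'a \<Rightarrow> real).
           prob_space M \<and> prob_space.indep_vars M (\<lambda>_. borel) X {1..} \<and>
           (\<forall>i\<ge>1. distr M borel (X i) = Q)
           \<longrightarrow> (AE \<omega> in M. \<exists>N2. \<forall>n>N2. frechet_mean_set X n \<omega> \<subseteq> {-r..r})"
proof (cases "real_distribution Q")
  case True
  then obtain K where "K \<ge> 0" "3 / 4 < measure Q {-K..K}"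
    using real_distribution.exists_interval_measure_gt[of Q "3 / 4"] by auto
  moreover have "0 < minimiser_radius K"
    using \<open>K \<ge> 0\<close> minimiser_radius_gt[of K] by linarith
  ultimately show ?thesis
    by (intro exI[of _ "minimiser_radius K"]) (auto intro: prob_space.AE_eventually_frechet_mean_set_subset)
next
  case False
  have "\<not> (prob_space M \<and> prob_space.indep_vars M (\<lambda>_. borel) X {1..} \<and> (\<forall>i\<ge>1. distr M borel (X i) = Q))"
    for M :: "'a measure" and X :: "nat \<Rightarrow> 'a \<Rightarrow> real"
  proof
    assume hyps: "prob_space M \<and> prob_space.indep_vars M (\<lambda>_. borel) X {1..} \<and> (\<forall>i\<ge>1. distr M borel (X i) = Q)"
    then have "prob_space M" and "X 1 \<in> borel_measurable M"
      by (auto simp: prob_space.indep_vars_def)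
    then have "real_distribution (distr M borel (X 1))"
      by (rule prob_space.real_distribution_distr)
    with hyps False show False
      by simp
  qed
  then show ?thesis
    by (intro exI[of _ 1]) auto
qed

theorem lemma2p2:
  fixes m :: real
  assumes "m > 1/2"
  shows "\<exists>r>0. \<forall>(M :: 'a measure) (X :: nat \<Rightarrow> 'a \<Rightarrow> real).
           prob_space M \<and> prob_space.indep_vars M (\<lambda>_. borel) X {1..} \<and>
           (\<forall>i\<ge>1. distr M borel (X i) = pvii m)
           \<longrightarrow> (AE \<omega> in M. \<exists>N2. \<forall>n>N2. frechet_mean_set X n \<omega> \<subseteq> {-r..r})"
  by (rule frechet_mean_set_eventually_bounded)

end
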